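(* Let $f(x;q)=\sum_{n\ge0}\frac{x^n}{n!}q^{n(n-1)/2}$ for $x,q\in\mathbb C$, $|q|<1$. Assume that for some $k\in\mathbb N\cup\{0\}$, $u>0$ and $t\in(0,1)$, \[ G_k(u;t):=k!\sum_{n\ge0}\frac{u^{n-k}}{n!}t^{(n-k)^2/2}\le 2. \] Then for every $q\in\mathbb C$ with $0<|q|<t$, the function $x\mapsto f(x;q)$ has exactly $k$ zeros (counted with multiplicity) in the open disk $\{|x|<r\}$ with $r=u|q|^{1/2-k}$, and no zeros on the circle $|x|=r$. *)

theory Defs
  imports "HOL-Complex_Analysis.Complex_Analysis"
begin

definition qf :: "complex \<Rightarrow> complex \<Rightarrow> complex" where
  "qf q x = (\<Sum>n. x ^ n / of_nat (fact n) * q ^ (n * (n - 1) div 2))"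

definition G :: "nat \<Rightarrow> real \<Rightarrow> real \<Rightarrow> real" where
  "G k u t = fact k * (\<Sum>n. u powr (real n - real k) / fact n
                            * t powr ((real n - real k)^2 / 2))"

end

theory Submission
  imports Defs
begin

text \<open>Write \<open>f(x;q) = \<Sum>\<^sub>n c\<^sub>n x\<^sup>n\<close>. On the circle \<open>|x| = r\<close> one has
  \<open>|c\<^sub>n x\<^sup>n| = |c\<^sub>k x\<^sup>k| k! u^(n-k) |q|^((n-k)^2/2) / n!\<close>, i.e. \<open>|c\<^sub>k x\<^sup>k|\<close> times the \<open>n\<close>-th summand
  of \<open>G\<^sub>k(u;|q|)\<close>. So the terms with \<open>n \<noteq> k\<close> have total modulus at most
  \<open>(G\<^sub>k(u;|q|) - 1) |c\<^sub>k x\<^sup>k|\<close>, and since \<open>G\<^sub>k(u;\<cdot>)\<close> is strictly increasing,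
  \<open>G\<^sub>k(u;|q|) < G\<^sub>k(u;t) \<le> 2\<close>. Thus \<open>c\<^sub>k x\<^sup>k\<close> dominates \<open>f(x;q) - c\<^sub>k x\<^sup>k\<close> on the circle,
  and by Rouche's theorem \<open>f(\<cdot>;q)\<close> has as many zeros in the disk as \<open>c\<^sub>k x\<^sup>k\<close>, namely \<open>k\<close>.\<close>

lemma sums_delete_term:
  fixes f :: "nat \<Rightarrow> 'a::real_normed_vector"
  assumes "f sums s"
  shows "(\<lambda>n. if n = k then 0 else f n) sums (s - f k)"
proof -
  have "(\<lambda>n. f n - (if n = k then f n else 0)) sums (s - f k)"
    by (rule sums_diff[OF assms sums_single[of k f]])
  then show ?thesis
    by (simp add: if_distrib cong: if_cong)
qed

lemma norm_suminf_minus_term_le: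
  fixes f :: "nat \<Rightarrow> 'a::banach"
  assumes "summable (\<lambda>n. norm (f n))"
  shows "norm (suminf f - f k) \<le> (\<Sum>n. norm (f n)) - norm (f k)"
proof -
  let ?g = "\<lambda>n. if n = k then 0 else f n"
  have "?g sums (suminf f - f k)"
    by (rule sums_delete_term[OF summable_sums[OF summable_norm_cancel[OF assms]]])
  then have norm_eq: "norm (suminf f - f k) = norm (suminf ?g)"
    by (simp add: sums_iff)
  have "(\<lambda>n. norm (?g n)) = (\<lambda>n. if n = k then 0 else norm (f n))"
    by auto
  then have "(\<lambda>n. norm (?g n)) sums ((\<Sum>n. norm (f n)) - norm (f k))"
    using sums_delete_term[OF summable_sums[OF assms]] by simp
  then show ?thesis
    using summable_norm[of ?g] norm_eq by (simp add: sums_iff)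
qed

lemma entire_finite_zeros_compact:
  fixes f :: "complex \<Rightarrow> complex"
  assumes "f holomorphic_on UNIV" "f w \<noteq> 0" "compact K"
  shows "finite {z \<in> K. f z = 0}"
proof (cases "f constant_on UNIV")
  case True
  then have "{z \<in> K. f z = 0} = {}"
    using assms(2) by (auto simp: constant_on_def)
  then show ?thesis
    by (simp only: finite.emptyI)
next
  case False
  then show ?thesis
    using assms by (intro holomorphic_compact_finite_zeros) auto
qed

lemma sum_winding_circlepath_zorder:
  fixes h :: "complex \<Rightarrow> complex"
  assumes fin: "finite {z \<in> ball 0 R. h z = 0}" and "0 < r" "r < R"
    and nz: "\<And>z. norm z = r \<Longrightarrow> h z \<noteq> 0"
  shows "(\<Sum>z \<in> {z \<in> ball 0 R. h z = 0}. winding_number (circlepath 0 r) z * of_int (zorder h z))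
         = of_int (\<Sum>z \<in> {z \<in> ball 0 r. h z = 0}. zorder h z)"
proof -
  have outside: "winding_number (circlepath 0 r) z = 0" if "z \<in> {z \<in> ball 0 R. h z = 0} - ball 0 r" for z
  proof -
    from that have "r \<le> norm z" "h z = 0"
      by auto
    with nz have "z \<notin> cball 0 r"
      by force
    then show ?thesis
      using \<open>0 < r\<close> by (intro winding_number_zero_outside[of _ "cball 0 r"])
        (auto simp: valid_path_imp_path sphere_cball)
  qed
  have "(\<Sum>z \<in> {z \<in> ball 0 R. h z = 0}. winding_number (circlepath 0 r) z * of_int (zorder h z))
      = (\<Sum>z \<in> {z \<in> ball 0 r. h z = 0}. winding_number (circlepath 0 r) z * of_int (zorder h z))"
    using \<open>r < R\<close> outside by (intro sum.mono_neutral_right[OF fin]) auto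
  also have "\<dots> = (\<Sum>z \<in> {z \<in> ball 0 r. h z = 0}. of_int (zorder h z))"
    by (intro sum.cong refl) (simp add: winding_number_circlepath)
  finally show ?thesis by simp
qed

lemma Rouche_zorder_sum_ball:
  fixes f g :: "complex \<Rightarrow> complex"
  assumes f: "f holomorphic_on UNIV" and g: "g holomorphic_on UNIV" and "0 < r"
    and less: "\<And>z. norm z = r \<Longrightarrow> norm (f z - g z) < norm (g z)"
  shows "(\<Sum>z \<in> {z \<in> ball 0 r. f z = 0}. zorder f z) = (\<Sum>z \<in> {z \<in> ball 0 r. g z = 0}. zorder g z)"
proof -
  define R where "R = r + 1"
  have nz: "f z \<noteq> 0" "g z \<noteq> 0" if "norm z = r" for z
    using less[OF that] by (auto simp: norm_minus_commute)
  have fin: "finite {z \<in> ball 0 R. h z = 0}"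
    if h: "h holomorphic_on UNIV" "\<And>z. norm z = r \<Longrightarrow> h z \<noteq> 0" for h
  proof -
    have "h (of_real r) \<noteq> 0"
      using h(2) \<open>0 < r\<close> by simp
    with h(1) have "finite {z \<in> cball 0 R. h z = 0}"
      by (rule entire_finite_zeros_compact[OF _ _ compact_cball])
    then show ?thesis
      by (rule finite_subset[rotated]) auto
  qed
  have "(\<Sum>z \<in> {z \<in> ball 0 R. g z + (f z - g z) = 0}.
           winding_number (circlepath 0 r) z * of_int (zorder (\<lambda>z. g z + (f z - g z)) z))
      = (\<Sum>z \<in> {z \<in> ball 0 R. g z = 0}. winding_number (circlepath 0 r) z * of_int (zorder g z))"
  proof (rule Rouche_theorem)
    show "finite {z \<in> ball 0 R. g z + (f z - g z) = 0}"
      using fin[OF f nz(1)] by simp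
    show "finite {z \<in> ball 0 R. g z = 0}"
      using fin[OF g nz(2)] .
    show "g holomorphic_on ball 0 R" "(\<lambda>z. f z - g z) holomorphic_on ball 0 R"
      using f g by (auto intro: holomorphic_on_subset holomorphic_on_diff)
    show "path_image (circlepath 0 r) \<subseteq> ball 0 R"
      using \<open>0 < r\<close> by (auto simp: R_def)
    show "\<forall>z \<in> path_image (circlepath 0 r). norm (f z - g z) < norm (g z)"
      using \<open>0 < r\<close> less by auto
    show "\<forall>z. z \<notin> ball 0 R \<longrightarrow> winding_number (circlepath 0 r) z = 0"
      using \<open>0 < r\<close> by (auto simp: R_def valid_path_imp_path sphere_cball
          intro!: winding_number_zero_outside[of _ "cball 0 r"])
  qed auto
  moreover have "r < R"
    by (simp add: R_def)
  ultimately have "(of_int (\<Sum>z \<in> {z \<in> ball 0 r. f z = 0}. zorder f z) :: complex)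
      = of_int (\<Sum>z \<in> {z \<in> ball 0 r. g z = 0}. zorder g z)"
    using sum_winding_circlepath_zorder[OF fin[OF f nz(1)] \<open>0 < r\<close> \<open>r < R\<close> nz(1)]
      sum_winding_circlepath_zorder[OF fin[OF g nz(2)] \<open>0 < r\<close> \<open>r < R\<close> nz(2)]
    by (simp del: of_int_sum)
  then show ?thesis
    by (rule of_int_eq_iff[THEN iffD1])
qed

lemma zorder_sum_ball_monomial:
  fixes c :: complex
  assumes "c \<noteq> 0" "0 < r"
  shows "(\<Sum>z \<in> {z \<in> ball 0 r. c * z ^ k = 0}. zorder (\<lambda>z. c * z ^ k) z) = int k"
proof (cases "k = 0")
  case True
  then show ?thesis using assms by simp
next
  case False
  then have "{z \<in> ball 0 r. c * z ^ k = 0} = {0}"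
    using assms by auto
  moreover have "zorder (\<lambda>z. c * z ^ k) 0 = int k"
    using assms by (intro zorder_eqI[of UNIV 0 "\<lambda>_. c"]) auto
  ultimately show ?thesis by simp
qed

definition qf_coeff :: "complex \<Rightarrow> nat \<Rightarrow> complex" where
  "qf_coeff q n = q ^ (n * (n - 1) div 2) / fact n"

lemma qf_eq_suminf: "qf q x = (\<Sum>n. qf_coeff q n * x ^ n)"
  unfolding qf_def qf_coeff_def by (simp add: ac_simps)

lemma summable_norm_qf_terms:
  assumes "norm q \<le> 1"
  shows "summable (\<lambda>n. norm (qf_coeff q n * x ^ n))"
proof (rule summable_comparison_test')
  show "summable (\<lambda>n. norm x ^ n / fact n)"
    using summable_exp[of "norm x"] by (simp add: field_simps)
  fix n :: nat
  have "norm q ^ (n * (n - 1) div 2) \<le> 1"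
    using assms by (simp add: power_le_one)
  then show "norm (norm (qf_coeff q n * x ^ n)) \<le> norm x ^ n / fact n"
    by (simp add: qf_coeff_def norm_mult norm_divide norm_power divide_right_mono
        mult_left_le_one_le)
qed

lemma holomorphic_qf:
  assumes "norm q \<le> 1"
  shows "qf q holomorphic_on UNIV"
proof -
  have "qf q = (\<lambda>x. \<Sum>n. qf_coeff q n * x ^ n)"
    by (simp add: fun_eq_iff qf_eq_suminf)
  then have "(qf q has_field_derivative (\<Sum>n. diffs (qf_coeff q) n * x ^ n)) (at x)" for x
    using summable_norm_cancel[OF summable_norm_qf_terms[OF assms]]
    by (simp add: termdiffs_strong_converges_everywhere)
  then show ?thesis
    by (auto simp: holomorphic_on_def field_differentiable_def field_differentiable_at_within)
qed

definition G_summand :: "nat \<Rightarrow> real \<Rightarrow> real \<Rightarrow> nat \<Rightarrow> real" where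
  "G_summand k u t n = u powr (real n - real k) / fact n * t powr ((real n - real k)^2 / 2)"

lemma G_eq_suminf: "G k u t = fact k * suminf (G_summand k u t)"
  unfolding G_def G_summand_def by (rule refl)

lemma G_summand_self: "u > 0 \<Longrightarrow> t > 0 \<Longrightarrow> G_summand k u t k = 1 / fact k"
  by (simp add: G_summand_def)

lemma summable_G_summand:
  assumes "u > 0" "0 \<le> t" "t \<le> 1"
  shows "summable (G_summand k u t)"
proof (rule summable_comparison_test')
  show "summable (\<lambda>n. u powr (- real k) * (u ^ n / fact n))"
    using summable_exp[of u] by (intro summable_mult) (simp add: field_simps)
  fix n :: nat
  have "t powr ((real n - real k)^2 / 2) \<le> 1"
    using assms by (intro powr_le1) auto
  moreover have "u powr (real n - real k) = u powr (- real k) * u ^ n"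
    using assms by (simp add: powr_add[symmetric] powr_realpow[symmetric])
  ultimately have "norm (G_summand k u t n)
      = u powr (- real k) * (u ^ n / fact n) * t powr ((real n - real k)^2 / 2)"
    using assms by (simp add: G_summand_def)
  also have "\<dots> \<le> u powr (- real k) * (u ^ n / fact n)"
    using assms \<open>t powr _ \<le> 1\<close> by (intro mult_left_le) auto
  finally show "norm (G_summand k u t n) \<le> u powr (- real k) * (u ^ n / fact n)" .
qed

lemma G_strict_mono:
  assumes "u > 0" "0 < s" "s < t" "t \<le> 1"
  shows "G k u s < G k u t"
proof -
  have mono: "G_summand k u s n \<le> G_summand k u t n" for n
    using assms unfolding G_summand_def by (intro mult_left_mono powr_mono2) auto
  have "G_summand k u s (Suc k) < G_summand k u t (Suc k)"
    using assms unfolding G_summand_def by (intro mult_strict_left_mono powr_less_mono2) auto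
  then have "0 < (\<Sum>n. G_summand k u t n - G_summand k u s n)"
    using assms mono by (intro suminf_pos2[of _ "Suc k"] summable_diff summable_G_summand) auto
  also have "\<dots> = suminf (G_summand k u t) - suminf (G_summand k u s)"
    using assms by (intro suminf_diff[symmetric] summable_G_summand) auto
  finally show ?thesis
    by (simp add: G_eq_suminf)
qed

lemma real_triangular_number: "real (n * (n - 1) div 2) = real n * (real n - 1) / 2"
proof -
  have "even (n * (n - 1))" by auto
  then have "real (n * (n - 1) div 2) = real (n * (n - 1)) / 2"
    by (simp add: real_of_nat_div)
  also have "real (n * (n - 1)) = real n * (real n - 1)"
    by (cases n) (auto simp: algebra_simps)
  finally show ?thesis .
qed

lemma norm_qf_term_on_circle:
  assumes "0 < norm q" "0 < u" and x: "norm x = u * norm q powr (1/2 - real k)"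
  shows "norm (qf_coeff q n * x ^ n)
         = u powr real k * norm q powr (- (real k ^ 2) / 2) * G_summand k u (norm q) n"
proof -
  define s where "s = norm q"
  have "0 < s"
    using assms by (simp add: s_def)
  have triangular: "s ^ (n * (n - 1) div 2) = s powr (real n * (real n - 1) / 2)"
    using \<open>0 < s\<close> by (metis powr_realpow real_triangular_number)
  have power: "(u * s powr (1/2 - real k)) ^ n = u powr real n * s powr (real n * (1/2 - real k))"
    using \<open>0 < s\<close> \<open>0 < u\<close> by (simp add: powr_realpow[symmetric] powr_mult powr_powr ac_simps)
  have exponent: "real n * (real n - 1) / 2 + real n * (1/2 - real k)
      = - (real k ^ 2) / 2 + (real n - real k)^2 / 2"
    by (simp add: power2_eq_square field_simps)
  have "norm (qf_coeff q n * x ^ n) = s ^ (n * (n - 1) div 2) * (u * s powr (1/2 - real k)) ^ n / fact n"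
    using x by (simp add: s_def qf_coeff_def norm_mult norm_divide norm_power)
  also have "\<dots> = u powr real n * (s powr (real n * (real n - 1) / 2) * s powr (real n * (1/2 - real k)))
      / fact n"
    by (simp only: triangular power mult_ac)
  also have "\<dots> = u powr (real n - real k) * u powr real k
      * (s powr (- (real k ^ 2) / 2) * s powr ((real n - real k)^2 / 2)) / fact n"
    by (simp only: powr_add[symmetric] exponent diff_add_cancel)
  finally show ?thesis
    by (simp add: s_def G_summand_def ac_simps)
qed

lemma qf_dominant_term:
  assumes "0 < u" "t \<le> 1" "G k u t \<le> 2" "0 < norm q" "norm q < t"
    and x: "norm x = u * norm q powr (1/2 - real k)"
  shows "norm (qf q x - qf_coeff q k * x ^ k) < norm (qf_coeff q k * x ^ k)"
proof -
  define s where "s = norm q"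
  define A where "A = u powr real k * s powr (- (real k ^ 2) / 2)"
  have "0 < s" "s < t" "A > 0"
    using assms by (auto simp: s_def A_def)
  have norm_term: "norm (qf_coeff q n * x ^ n) = A * G_summand k u s n" for n
    unfolding A_def s_def using assms(4,1,6) by (rule norm_qf_term_on_circle)
  have k_term: "norm (qf_coeff q k * x ^ k) = A / fact k"
    using \<open>0 < s\<close> \<open>0 < u\<close> by (simp add: norm_term G_summand_self)
  have "summable (\<lambda>n. norm (qf_coeff q n * x ^ n))"
    using assms by (intro summable_norm_qf_terms) simp
  then have "norm (qf q x - qf_coeff q k * x ^ k) \<le> (\<Sum>n. A * G_summand k u s n) - A / fact k"
    using norm_suminf_minus_term_le[of "\<lambda>n. qf_coeff q n * x ^ n" k] \<open>0 < s\<close> \<open>0 < u\<close>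
    by (simp add: qf_eq_suminf norm_term G_summand_self)
  also have "\<dots> = A / fact k * (G k u s - 1)"
    using \<open>0 < s\<close> \<open>s < t\<close> assms
    by (simp add: suminf_mult summable_G_summand G_eq_suminf field_simps)
  also have "\<dots> < A / fact k * (G k u t - 1)"
    using \<open>A > 0\<close> G_strict_mono[OF \<open>0 < u\<close> \<open>0 < s\<close> \<open>s < t\<close> \<open>t \<le> 1\<close>]
    by (intro mult_strict_left_mono) auto
  also have "\<dots> \<le> A / fact k"
    using \<open>A > 0\<close> \<open>G k u t \<le> 2\<close> by (intro mult_left_le) auto
  finally show ?thesis
    by (simp add: k_term)
qed

theorem lemma1:
  fixes k :: nat and u t :: real and q :: complex
  assumes "u > 0" and "0 < t" and "t < 1"
    and "G k u t \<le> 2"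
    and "0 < norm q" and "norm q < t"
  defines "r \<equiv> u * norm q powr (1/2 - real k)"
  shows "finite {z \<in> ball 0 r. qf q z = 0}
         \<and> (\<Sum>z \<in> {z \<in> ball 0 r. qf q z = 0}. zorder (qf q) z) = int k
         \<and> (\<forall>z \<in> sphere 0 r. qf q z \<noteq> 0)"
proof -
  have "0 < r" "norm q \<le> 1" "qf_coeff q k \<noteq> 0"
    using assms by (auto simp: qf_coeff_def)
  have dominant: "norm (qf q z - qf_coeff q k * z ^ k) < norm (qf_coeff q k * z ^ k)"
    if "norm z = r" for z
    using assms(1,3-6) that unfolding r_def by (intro qf_dominant_term) auto
  then have nz: "qf q z \<noteq> 0" if "norm z = r" for z
    using that by fastforce
  have holo: "qf q holomorphic_on UNIV"
    using \<open>norm q \<le> 1\<close> by (rule holomorphic_qf)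
  have "qf q (of_real r) \<noteq> 0"
    using nz \<open>0 < r\<close> by simp
  with holo have "finite {z \<in> cball 0 r. qf q z = 0}"
    by (rule entire_finite_zeros_compact[OF _ _ compact_cball])
  then have fin: "finite {z \<in> ball 0 r. qf q z = 0}"
    by (rule finite_subset[rotated]) auto
  have "(\<Sum>z \<in> {z \<in> ball 0 r. qf q z = 0}. zorder (qf q) z)
      = (\<Sum>z \<in> {z \<in> ball 0 r. qf_coeff q k * z ^ k = 0}. zorder (\<lambda>z. qf_coeff q k * z ^ k) z)"
    by (rule Rouche_zorder_sum_ball[OF holo _ \<open>0 < r\<close> dominant]) (intro holomorphic_intros)
  also have "\<dots> = int k"
    using \<open>qf_coeff q k \<noteq> 0\<close> \<open>0 < r\<close> by (rule zorder_sum_ball_monomial)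
  finally show ?thesis
    using fin nz by simp
qed

end
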